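(* For every $k\ge 1$, the bi-hypergraph obtained from $\mathcal H_{2k}$ by adding two new vertices $u$ and $v$, removing the edge $\{v_{1,1},v_{1,2},v_{1,3}\}$, and adding the edges $\{u,v_{1,1},v_{1,2}\}$, $\{v,v_{1,2},v_{1,3}\}$, and $\{u,v_{1,j},v_{2k,3-j}\}$ and $\{v,v_{1,j+1},v_{2k,4-j}\}$ for all $j\in[2]$, is minimal uncolorable.
   Context: A bi-hypergraph $\mathcal H=(V,E)$ consists of a finite vertex set $V$ and a set $E$ of subsets of $V$, called edges, with no edge contained in another. A mapping $f:V\to\mathbb N$ is a proper coloring of $\mathcal H$ if $1<|f(e)|<|e|$ for every $e\in E$, where $f(e)=\{f(x):x\in e\}$. $\mathcal H$ is colorable if it has a proper coloring, and uncolorable otherwise. A subhypergraph of $\mathcal H$ is a bi-hypergraph $(V',E')$ with $V'\subseteq V$, $E'\subseteq E$; $\mathcal H$ is minimal uncolorable if it is uncolorable but every proper subhypergraph of it is colorable. For $k\ge 2$, $\mathcal H_k$ is the $3$-uniform bi-hypergraph with vertex set $\{v_{i,j}: i\in[k], j\in[3]\}$ (all distinct), with the convention $v_{i,4}=v_{i,1}$, $v_{i,5}=v_{i,2}$, whose edges are the sets $\{v_{i,1},v_{i,2},v_{i,3}\}$ for all $i\in[k]$ and the sets $\{v_{q+1,j},v_{q,j},v_{q,j+t}\}$ for all $q\in[k-1]$, $j\in[3]$, $t\in\{1,2\}$. *)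

theory Defs
  imports Main
begin

definition bihypergraph :: "'a set \<Rightarrow> 'a set set \<Rightarrow> bool" where
  "bihypergraph V E \<longleftrightarrow> finite V \<and> (\<forall>e\<in>E. e \<subseteq> V)
     \<and> (\<forall>e\<in>E. \<forall>e'\<in>E. e \<subseteq> e' \<longrightarrow> e = e')"

definition proper_coloring :: "'a set set \<Rightarrow> ('a \<Rightarrow> nat) \<Rightarrow> bool" where
  "proper_coloring E f \<longleftrightarrow> (\<forall>e\<in>E. 1 < card (f ` e) \<and> card (f ` e) < card e)"

definition colorable :: "'a set \<Rightarrow> 'a set set \<Rightarrow> bool" where
  "colorable V E \<longleftrightarrow> (\<exists>f. proper_coloring E f)"

definition minimal_uncolorable :: "'a set \<Rightarrow> 'a set set \<Rightarrow> bool" where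
  "minimal_uncolorable V E \<longleftrightarrow> bihypergraph V E \<and> \<not> colorable V E \<and>
     (\<forall>V' E'. bihypergraph V' E' \<and> V' \<subseteq> V \<and> E' \<subseteq> E \<and> (V', E') \<noteq> (V, E)
        \<longrightarrow> colorable V' E')"

text \<open>Vertices: Vx i j stands for v_{i,j}; U and W stand for the new vertices u and v.\<close>
datatype vert = Vx nat nat | U | W

text \<open>v_{i,j} with the convention v_{i,4} = v_{i,1}, v_{i,5} = v_{i,2} (for j \<ge> 1).\<close>
definition vv :: "nat \<Rightarrow> nat \<Rightarrow> vert" where
  "vv i j = Vx i ((j - 1) mod 3 + 1)"

definition HV :: "nat \<Rightarrow> vert set" where
  "HV k = {vv i j | i j. i \<in> {1..k} \<and> j \<in> {1..3}}"

definition HE :: "nat \<Rightarrow> vert set set" where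
  "HE k = {{vv i 1, vv i 2, vv i 3} | i. i \<in> {1..k}}
        \<union> {{vv (q+1) j, vv q j, vv q (j+t)} | q j t. q \<in> {1..k-1} \<and> j \<in> {1..3} \<and> t \<in> {1,2}}"

definition GV :: "nat \<Rightarrow> vert set" where
  "GV k = HV (2*k) \<union> {U, W}"

definition GE :: "nat \<Rightarrow> vert set set" where
  "GE k = (HE (2*k) - {{vv 1 1, vv 1 2, vv 1 3}})
        \<union> {{U, vv 1 1, vv 1 2}, {W, vv 1 2, vv 1 3}}
        \<union> {{U, vv 1 j, vv (2*k) (3-j)} | j. j \<in> {1..2}}
        \<union> {{W, vv 1 (j+1), vv (2*k) (4-j)} | j. j \<in> {1..2}}"

end

theory Submission
  imports Defs
begin

text \<open>A proper colouring gives every edge exactly two colours. If the colour triples of two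
consecutive layers are both two-valued, the six edges between them force the later layer to
carry its odd colour at the same position as the earlier one, with the two colours exchanged.
Hence layer 2k repeats layer 2, and since layer 2 is in turn linked to layer 1, no choice of
colours for u and v satisfies the six edges through them. Conversely, after deleting any one
edge there is a colouring whose layers alternate between a triple and its swap, with the only
break of the alternation placed at the deleted edge.\<close>

definition two_valued :: "nat \<Rightarrow> nat \<Rightarrow> nat \<Rightarrow> bool" where
  "two_valued a b c \<longleftrightarrow> \<not> (a = b \<and> b = c) \<and> (a = b \<or> b = c \<or> a = c)"

lemma proper_on_triple_iff:
  assumes "x \<noteq> y" "y \<noteq> z" "x \<noteq> z"
  shows "1 < card (f ` {x, y, z}) \<and> card (f ` {x, y, z}) < card {x, y, z}
    \<longleftrightarrow> two_valued (f x) (f y) (f z)"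
  using assms by (auto simp: two_valued_def card_insert_if)

definition linked :: "nat \<Rightarrow> nat \<Rightarrow> nat \<Rightarrow> nat \<Rightarrow> nat \<Rightarrow> nat \<Rightarrow> bool" where
  "linked a1 a2 a3 b1 b2 b3 \<longleftrightarrow>
     two_valued b1 a1 a2 \<and> two_valued b1 a1 a3 \<and> two_valued b2 a2 a3 \<and> two_valued b2 a2 a1
     \<and> two_valued b3 a3 a1 \<and> two_valued b3 a3 a2"

lemma linked_linked_eq:
  assumes "two_valued a1 a2 a3" "two_valued b1 b2 b3" "two_valued c1 c2 c3"
    and "linked a1 a2 a3 b1 b2 b3" "linked b1 b2 b3 c1 c2 c3"
  shows "c1 = a1 \<and> c2 = a2 \<and> c3 = a3"
  using assms unfolding two_valued_def linked_def by smt

text \<open>Here \<open>a\<close> is the colour triple of layer 1 and \<open>b\<close> that of layer 2, which is also the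
colour triple of layer 2k.\<close>
lemma closing_gadget_impossible:
  assumes "two_valued b1 b2 b3" "linked a1 a2 a3 b1 b2 b3"
    and "two_valued u a1 a2" "two_valued w a2 a3"
    and "two_valued u a1 b2" "two_valued u a2 b1" "two_valued w a2 b3" "two_valued w a3 b2"
  shows False
  using assms unfolding two_valued_def linked_def by smt

text \<open>Indices reach \<open>vv\<close> both as numerals and, after arithmetic such as \<open>j + t\<close>,
in \<open>Suc\<close> form.\<close>
lemma vv_eval [simp]:
  "vv i 1 = Vx i 1" "vv i 2 = Vx i 2" "vv i 3 = Vx i 3" "vv i 4 = Vx i 1" "vv i 5 = Vx i 2"
  "vv i (Suc 0) = Vx i 1" "vv i (Suc (Suc 0)) = Vx i 2" "vv i (Suc (Suc (Suc 0))) = Vx i 3"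
  "vv i (Suc (Suc (Suc (Suc 0)))) = Vx i 1" "vv i (Suc (Suc (Suc (Suc (Suc 0))))) = Vx i 2"
  by (simp_all add: vv_def)

datatype edge_name = Layer nat | Link nat nat nat | U_base | W_base | U_edge nat | W_edge nat

fun triple :: "nat \<Rightarrow> edge_name \<Rightarrow> vert \<times> vert \<times> vert" where
  "triple k (Layer i) = (vv i 1, vv i 2, vv i 3)"
| "triple k (Link q j t) = (vv (q+1) j, vv q j, vv q (j+t))"
| "triple k U_base = (U, vv 1 1, vv 1 2)"
| "triple k W_base = (W, vv 1 2, vv 1 3)"
| "triple k (U_edge j) = (U, vv 1 j, vv (2*k) (3-j))"
| "triple k (W_edge j) = (W, vv 1 (j+1), vv (2*k) (4-j))"

definition edge :: "nat \<Rightarrow> edge_name \<Rightarrow> vert set" where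
  "edge k d = (case triple k d of (x, y, z) \<Rightarrow> {x, y, z})"

definition edge_names :: "nat \<Rightarrow> edge_name set" where
  "edge_names k = Layer ` {2..2*k}
     \<union> {Link q j t | q j t. q \<in> {1..2*k-1} \<and> j \<in> {1,2,3} \<and> t \<in> {1,2}}
     \<union> {U_base, W_base} \<union> U_edge ` {1,2} \<union> W_edge ` {1,2}"

lemma edge_names_cases [consumes 1, case_names Layer Link U_base W_base U_edge W_edge]:
  assumes "d \<in> edge_names k"
  obtains (Layer) i where "d = Layer i" "2 \<le> i" "i \<le> 2*k"
  | (Link) q j t where "d = Link q j t" "1 \<le> q" "q < 2*k" "j \<in> {1,2,3}" "t \<in> {1,2}"
  | (U_base) "d = U_base"
  | (W_base) "d = W_base"
  | (U_edge) j where "d = U_edge j" "j \<in> {1,2}"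
  | (W_edge) j where "d = W_edge j" "j \<in> {1,2}"
  using assms unfolding edge_names_def by fastforce

lemma ball_edge_names_iff:
  "(\<forall>d\<in>edge_names k. P d) \<longleftrightarrow>
     (\<forall>i\<in>{2..2*k}. P (Layer i)) \<and> (\<forall>q\<in>{1..2*k-1}. \<forall>j\<in>{1,2,3}. \<forall>t\<in>{1,2}. P (Link q j t))
     \<and> P U_base \<and> P W_base \<and> P (U_edge 1) \<and> P (U_edge 2) \<and> P (W_edge 1) \<and> P (W_edge 2)"
  unfolding edge_names_def by auto

lemma first_layer_edge_eq_iff: "{vv i 1, vv i 2, vv i 3} = {vv 1 1, vv 1 2, vv 1 3} \<longleftrightarrow> i = 1"
proof
  assume "{vv i 1, vv i 2, vv i 3} = {vv 1 1, vv 1 2, vv 1 3}"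
  then have "vv i 1 \<in> {vv 1 1, vv 1 2, vv 1 3}" by blast
  then show "i = 1" by simp
qed simp

lemma link_edge_neq_first_layer:
  assumes "q \<ge> 1"
  shows "{vv (q+1) j, vv q j, vv q (j+t)} \<noteq> {vv 1 1, vv 1 2, vv 1 3}"
proof
  assume "{vv (q+1) j, vv q j, vv q (j+t)} = {vv 1 1, vv 1 2, vv 1 3}"
  then have "vv (q+1) j \<in> {vv 1 1, vv 1 2, vv 1 3}" by blast
  with assms show False by (simp add: vv_def)
qed

lemma edge_in_GE:
  assumes "d \<in> edge_names k"
  shows "edge k d \<in> GE k"
  using assms
proof (cases rule: edge_names_cases)
  case (Layer i)
  then have "{vv i 1, vv i 2, vv i 3} \<in> HE (2*k)"
    unfolding HE_def by auto
  moreover have "{vv i 1, vv i 2, vv i 3} \<noteq> {vv 1 1, vv 1 2, vv 1 3}"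
    using Layer first_layer_edge_eq_iff[of i] by simp
  ultimately show ?thesis
    using Layer unfolding GE_def by (simp add: edge_def)
next
  case (Link q j t)
  then have "q \<in> {1..2*k-1}" "j \<in> {1..3}" by auto
  with Link have "{vv (q+1) j, vv q j, vv q (j+t)} \<in> HE (2*k)"
    unfolding HE_def by blast
  then show ?thesis
    using Link link_edge_neq_first_layer[of q j t] unfolding GE_def by (simp add: edge_def)
qed (auto simp: GE_def edge_def)

lemma edge_image_extras:
  "edge k ` ({U_base, W_base} \<union> U_edge ` {1,2} \<union> W_edge ` {1,2})
     = {{U, vv 1 1, vv 1 2}, {W, vv 1 2, vv 1 3}}
       \<union> {{U, vv 1 j, vv (2*k) (3-j)} | j. j \<in> {1..2}}
       \<union> {{W, vv 1 (j+1), vv (2*k) (4-j)} | j. j \<in> {1..2}}"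
proof -
  have "{1..2::nat} = {1,2}" by auto
  then show ?thesis
    unfolding Setcompr_eq_image by (simp add: image_Un image_image edge_def)
qed

lemma GE_eq_edge_image: "GE k = edge k ` edge_names k"
proof (intro equalityI subsetI)
  have "GE k = (HE (2*k) - {{vv 1 1, vv 1 2, vv 1 3}})
      \<union> edge k ` ({U_base, W_base} \<union> U_edge ` {1,2} \<union> W_edge ` {1,2})"
    unfolding GE_def edge_image_extras by (simp only: Un_assoc)
  moreover fix e assume "e \<in> GE k"
  ultimately consider "e \<in> HE (2*k)" "e \<noteq> {vv 1 1, vv 1 2, vv 1 3}"
    | "e \<in> edge k ` ({U_base, W_base} \<union> U_edge ` {1,2} \<union> W_edge ` {1,2})"
    by blast
  then show "e \<in> edge k ` edge_names k"
  proof cases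
    case 1
    from \<open>e \<in> HE (2*k)\<close> consider i where "i \<in> {1..2*k}" "e = {vv i 1, vv i 2, vv i 3}"
      | q j t where "q \<in> {1..2*k-1}" "j \<in> {1..3}" "t \<in> {1,2}" "e = {vv (q+1) j, vv q j, vv q (j+t)}"
      unfolding HE_def by blast
    then show ?thesis
    proof cases
      case (1 i)
      with \<open>e \<noteq> {vv 1 1, vv 1 2, vv 1 3}\<close> have "i \<noteq> 1" by auto
      with 1 have "Layer i \<in> edge_names k" by (auto simp: edge_names_def)
      with 1 show ?thesis by (intro image_eqI[of _ _ "Layer i"]) (simp_all add: edge_def)
    next
      case (2 q j t)
      then have "Link q j t \<in> edge_names k" by (auto simp: edge_names_def)
      with 2 show ?thesis by (intro image_eqI[of _ _ "Link q j t"]) (simp_all add: edge_def)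
    qed
  next
    case 2
    then show ?thesis unfolding edge_names_def by blast
  qed
qed (auto intro: edge_in_GE)

lemma triple_distinct:
  assumes "d \<in> edge_names k"
  shows "case triple k d of (x, y, z) \<Rightarrow> x \<noteq> y \<and> y \<noteq> z \<and> x \<noteq> z"
  using assms by (cases rule: edge_names_cases) (auto simp: vv_def)

lemma card_edge: "d \<in> edge_names k \<Longrightarrow> card (edge k d) = 3"
  using triple_distinct[of d k] by (auto simp: edge_def split: prod.splits)

definition properly_coloured :: "(vert \<Rightarrow> nat) \<Rightarrow> nat \<Rightarrow> edge_name \<Rightarrow> bool" where
  "properly_coloured f k d = (case triple k d of (x, y, z) \<Rightarrow> two_valued (f x) (f y) (f z))"

lemma proper_coloring_edge_image_iff:
  assumes "N \<subseteq> edge_names k"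
  shows "proper_coloring (edge k ` N) f \<longleftrightarrow> (\<forall>d\<in>N. properly_coloured f k d)"
proof -
  have "1 < card (f ` edge k d) \<and> card (f ` edge k d) < card (edge k d) \<longleftrightarrow> properly_coloured f k d"
    if "d \<in> edge_names k" for d
    using triple_distinct[OF that] proper_on_triple_iff[of _ _ _ f]
    by (auto simp: edge_def properly_coloured_def split: prod.splits)
  with assms show ?thesis
    unfolding proper_coloring_def Ball_image_comp comp_def by (meson subsetD)
qed

lemma proper_coloring_GE_iff:
  "proper_coloring (GE k) f \<longleftrightarrow> (\<forall>d\<in>edge_names k. properly_coloured f k d)"
  unfolding GE_eq_edge_image by (rule proper_coloring_edge_image_iff) simp

lemma layer_two_valued:
  assumes "proper_coloring (GE k) f" "2 \<le> i" "i \<le> 2*k"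
  shows "two_valued (f (Vx i 1)) (f (Vx i 2)) (f (Vx i 3))"
proof -
  have "Layer i \<in> edge_names k" using assms(2,3) by (simp add: edge_names_def)
  with assms(1) have "properly_coloured f k (Layer i)" by (simp add: proper_coloring_GE_iff)
  then show ?thesis by (simp add: properly_coloured_def)
qed

lemma consecutive_layers_linked:
  assumes "proper_coloring (GE k) f" "1 \<le> q" "q < 2*k"
  shows "linked (f (Vx q 1)) (f (Vx q 2)) (f (Vx q 3))
           (f (Vx (q+1) 1)) (f (Vx (q+1) 2)) (f (Vx (q+1) 3))"
proof -
  have link: "properly_coloured f k (Link q j t)" if "j \<in> {1,2,3}" "t \<in> {1,2}" for j t
    using assms that by (auto simp: proper_coloring_GE_iff edge_names_def)
  show ?thesis
    using link[of 1 1] link[of 1 2] link[of 2 1] link[of 2 2] link[of 3 1] link[of 3 2]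
    by (simp add: linked_def properly_coloured_def)
qed

lemma even_layers_agree:
  assumes "proper_coloring (GE k) f" "2 + 2*m \<le> 2*k"
  shows "f (Vx (2+2*m) 1) = f (Vx 2 1) \<and> f (Vx (2+2*m) 2) = f (Vx 2 2) \<and> f (Vx (2+2*m) 3) = f (Vx 2 3)"
  using assms(2)
proof (induction m)
  case (Suc m)
  define q where "q = 2 + 2*m"
  have q: "2 + 2 * Suc m = q + 2" "q + 2 \<le> 2*k" using Suc.prems by (auto simp: q_def)
  have "f (Vx (q+2) 1) = f (Vx q 1) \<and> f (Vx (q+2) 2) = f (Vx q 2) \<and> f (Vx (q+2) 3) = f (Vx q 3)"
    using layer_two_valued[OF assms(1), of q] layer_two_valued[OF assms(1), of "q+1"]
      layer_two_valued[OF assms(1), of "q+2"] consecutive_layers_linked[OF assms(1), of q]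
      consecutive_layers_linked[OF assms(1), of "q+1"] q
    by (intro linked_linked_eq) (auto simp: q_def)
  with Suc q show ?case by (simp add: q_def)
qed simp

lemma GE_not_colorable:
  assumes "k \<ge> 1"
  shows "\<not> colorable (GV k) (GE k)"
proof
  assume "colorable (GV k) (GE k)"
  then obtain f where f: "proper_coloring (GE k) f" unfolding colorable_def by blast
  have "2 + 2*(k-1) = 2*k" using assms by simp
  note last_layer = even_layers_agree[OF f, of "k-1", unfolded this]
  have extra: "properly_coloured f k d" if "d \<in> {U_base, W_base, U_edge 1, U_edge 2, W_edge 1, W_edge 2}" for d
    using f that by (auto simp: proper_coloring_GE_iff edge_names_def)
  show False
    using closing_gadget_impossible[of "f (Vx 2 1)" "f (Vx 2 2)" "f (Vx 2 3)"
        "f (Vx 1 1)" "f (Vx 1 2)" "f (Vx 1 3)" "f U" "f W"]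
      layer_two_valued[OF f, of 2] consecutive_layers_linked[OF f, of 1] assms last_layer
      extra[of U_base] extra[of W_base] extra[of "U_edge 1"] extra[of "U_edge 2"]
      extra[of "W_edge 1"] extra[of "W_edge 2"]
    by (simp add: properly_coloured_def numeral_2_eq_2)
qed

text \<open>Consecutive layers coloured by \<open>alternating\<close> are linked.\<close>
definition alternating :: "nat \<Rightarrow> nat \<Rightarrow> nat \<Rightarrow> nat \<Rightarrow> nat \<Rightarrow> nat" where
  "alternating p x y i j = (if odd i \<longleftrightarrow> j = p then y else x)"

text \<open>The deleted edge is layer \<open>i\<close> when \<open>lo = hi = i\<close>, a link
between layers \<open>q\<close> and \<open>q + 1\<close> when \<open>lo = q + 1\<close> and \<open>hi = q\<close>, and an edge through
\<open>u\<close> or \<open>v\<close> when \<open>lo = 2\<close> and \<open>hi = 1\<close>.\<close>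
definition glued_coloring ::
    "nat \<Rightarrow> nat \<Rightarrow> nat \<Rightarrow> nat \<Rightarrow> nat \<Rightarrow> nat \<Rightarrow> nat \<Rightarrow> nat \<Rightarrow> nat \<Rightarrow> nat \<Rightarrow> nat \<Rightarrow> nat \<Rightarrow> vert \<Rightarrow> nat" where
  "glued_coloring a1 a2 a3 p1 lo hi m p2 x y u w v = (case v of
      U \<Rightarrow> u
    | W \<Rightarrow> w
    | Vx i j \<Rightarrow> if i = 1 then (if j = 1 then a1 else if j = 2 then a2 else a3)
        else if i < lo then alternating p1 0 1 i j
        else if i \<le> hi then m
        else alternating p2 x y i j)"

lemmas coloring_simps =
  ball_edge_names_iff properly_coloured_def glued_coloring_def alternating_def two_valued_def

lemma coloring_except_Link:
  assumes "1 \<le> q" "q < 2*k" "j \<in> {1,2,3}" "t \<in> {1,2}"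
  shows "\<exists>f. \<forall>d\<in>edge_names k. d \<noteq> Link q j t \<longrightarrow> properly_coloured f k d"
proof -
  from assms(3,4) consider "j = 1" "t = 1" | "j = 1" "t = 2" | "j = 2" "t = 1"
    | "j = 2" "t = 2" | "j = 3" "t = 1" | "j = 3" "t = 2" by auto
  then show ?thesis
  proof cases
    case 1
    with assms(1,2) show ?thesis
      by (intro exI[of _ "glued_coloring 0 0 1 3 (q+1) q 0 1 0 1 1 0"]) (auto simp: coloring_simps)
  next
    case 2
    with assms(1,2) show ?thesis
      by (intro exI[of _ "glued_coloring 0 1 0 2 (q+1) q 0 1 0 1 0 0"]) (auto simp: coloring_simps)
  next
    case 3
    with assms(1,2) show ?thesis
      by (intro exI[of _ "glued_coloring 1 0 0 1 (q+1) q 0 2 0 1 0 1"]) (auto simp: coloring_simps)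
  next
    case 4
    with assms(1,2) show ?thesis
      by (intro exI[of _ "glued_coloring 0 0 1 3 (q+1) q 0 1 1 0 1 1"]) (auto simp: coloring_simps)
  next
    case 5
    with assms(1,2) show ?thesis
      by (intro exI[of _ "glued_coloring 0 1 0 2 (q+1) q 0 3 0 1 0 0"]) (auto simp: coloring_simps)
  next
    case 6
    with assms(1,2) show ?thesis
      by (intro exI[of _ "glued_coloring 1 0 0 1 (q+1) q 0 3 0 1 0 1"]) (auto simp: coloring_simps)
  qed
qed

lemma coloring_except_Layer:
  assumes "2 \<le> i" "i \<le> 2*k"
  shows "\<exists>f. \<forall>d\<in>edge_names k. d \<noteq> Layer i \<longrightarrow> properly_coloured f k d"
proof (cases "odd i")
  case True
  with assms show ?thesis
    by (intro exI[of _ "glued_coloring 0 0 1 3 i i 0 3 1 2 2 1"]) (auto simp: coloring_simps; presburger)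
next
  case False
  with assms show ?thesis
    by (intro exI[of _ "glued_coloring 0 0 1 3 i i 1 3 2 0 1 0"]) (auto simp: coloring_simps; presburger)
qed

lemma coloring_except_edge:
  assumes "k \<ge> 1" "d0 \<in> edge_names k"
  shows "\<exists>f. \<forall>d\<in>edge_names k. d \<noteq> d0 \<longrightarrow> properly_coloured f k d"
  using assms(2)
proof (cases rule: edge_names_cases)
  case (Layer i)
  then show ?thesis using coloring_except_Layer by blast
next
  case (Link q j t)
  then show ?thesis using coloring_except_Link by blast
next
  case U_base
  with assms(1) show ?thesis
    by (intro exI[of _ "glued_coloring 1 0 0 0 2 1 0 1 0 1 2 1"]) (auto simp: coloring_simps)
next
  case W_base
  with assms(1) show ?thesis
    by (intro exI[of _ "glued_coloring 0 0 1 0 2 1 0 3 0 1 1 2"]) (auto simp: coloring_simps)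
next
  case (U_edge j)
  then consider "d0 = U_edge 1" | "d0 = U_edge 2" by auto
  then show ?thesis
  proof cases
    case 1
    with assms(1) show ?thesis
      by (intro exI[of _ "glued_coloring 1 0 0 0 2 1 0 1 0 1 1 1"]) (auto simp: coloring_simps)
  next
    case 2
    with assms(1) show ?thesis
      by (intro exI[of _ "glued_coloring 1 0 0 0 2 1 0 1 0 1 0 1"]) (auto simp: coloring_simps)
  qed
next
  case (W_edge j)
  then consider "d0 = W_edge 1" | "d0 = W_edge 2" by auto
  then show ?thesis
  proof cases
    case 1
    with assms(1) show ?thesis
      by (intro exI[of _ "glued_coloring 0 0 1 0 2 1 0 3 0 1 1 0"]) (auto simp: coloring_simps)
  next
    case 2
    with assms(1) show ?thesis
      by (intro exI[of _ "glued_coloring 0 0 1 0 2 1 0 3 0 1 1 1"]) (auto simp: coloring_simps)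
  qed
qed

lemma proper_coloring_mono: "E' \<subseteq> E \<Longrightarrow> proper_coloring E f \<Longrightarrow> proper_coloring E' f"
  unfolding proper_coloring_def by blast

lemma proper_subset_GE_colorable:
  assumes "k \<ge> 1" "E' \<subseteq> GE k" "E' \<noteq> GE k"
  shows "colorable V' E'"
proof -
  obtain d0 where d0: "d0 \<in> edge_names k" "edge k d0 \<notin> E'"
    using assms(2,3) unfolding GE_eq_edge_image by blast
  obtain f where f: "\<forall>d\<in>edge_names k. d \<noteq> d0 \<longrightarrow> properly_coloured f k d"
    using coloring_except_edge[OF assms(1) d0(1)] by blast
  have "proper_coloring (edge k ` (edge_names k - {d0})) f"
    using f by (subst proper_coloring_edge_image_iff) auto
  moreover have "E' \<subseteq> edge k ` (edge_names k - {d0})"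
    using assms(2) d0(2) unfolding GE_eq_edge_image by blast
  ultimately show ?thesis
    unfolding colorable_def by (blast intro: proper_coloring_mono)
qed

lemma vv_in_GV:
  assumes "1 \<le> i" "i \<le> 2*k"
  shows "vv i j \<in> GV k"
proof -
  have "vv i j = vv i ((j - 1) mod 3 + 1)" "(j - 1) mod 3 + 1 \<in> {1..3}" "i \<in> {1..2*k}"
    using assms by (simp_all add: vv_def)
  then show ?thesis unfolding GV_def HV_def by blast
qed

lemma U_W_in_GV: "U \<in> GV k" "W \<in> GV k"
  by (simp_all add: GV_def)

lemma finite_HV: "finite (HV K)"
proof -
  have "HV K \<subseteq> (\<lambda>(i, j). vv i j) ` ({1..K} \<times> {1..3})"
    unfolding HV_def by auto
  then show ?thesis by (rule finite_subset) simp
qed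

lemma GE_subset_GV:
  assumes "k \<ge> 1" "e \<in> GE k"
  shows "e \<subseteq> GV k"
proof -
  obtain d where "d \<in> edge_names k" "e = edge k d"
    using assms(2) unfolding GE_eq_edge_image by blast
  then show ?thesis
    using assms(1) by (cases rule: edge_names_cases)
      (auto simp del: vv_eval simp: edge_def vv_in_GV U_W_in_GV)
qed

lemma GV_subset_Union_GE:
  assumes "k \<ge> 1"
  shows "GV k \<subseteq> \<Union> (GE k)"
proof
  fix v assume "v \<in> GV k"
  then consider i j where "v = vv i j" "i \<in> {1..2*k}" "j \<in> {1..3}" | "v = U" | "v = W"
    unfolding GV_def HV_def by blast
  then show "v \<in> \<Union> (GE k)"
  proof cases
    case (1 i j)
    then have "v = Vx i j" "j \<in> {1,2,3}" by (auto simp: vv_def)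
    then have "v \<in> edge k (if i = 1 then U_base else Layer i) \<union> edge k W_base"
      by (auto simp: edge_def)
    moreover have "(if i = 1 then U_base else Layer i) \<in> edge_names k" "W_base \<in> edge_names k"
      using 1 by (auto simp: edge_names_def)
    ultimately show ?thesis
      unfolding GE_eq_edge_image by blast
  qed (auto simp: GE_eq_edge_image edge_names_def edge_def)
qed

lemma bihypergraph_G:
  assumes "k \<ge> 1"
  shows "bihypergraph (GV k) (GE k)"
  unfolding bihypergraph_def
proof (intro conjI ballI impI)
  show "finite (GV k)" by (simp add: GV_def finite_HV)
  show "e \<subseteq> GV k" if "e \<in> GE k" for e
    using GE_subset_GV[OF assms that] .
  show "e = e'" if "e \<in> GE k" "e' \<in> GE k" "e \<subseteq> e'" for e e'
  proof -
    have "card e = 3" "card e' = 3"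
      using that(1,2) card_edge unfolding GE_eq_edge_image by auto
    then show ?thesis
      using that(3) by (metis card_subset_eq card.infinite zero_neq_numeral)
  qed
qed

theorem mainTheorem19:
  fixes k :: nat
  assumes "k \<ge> 1"
  shows "minimal_uncolorable (GV k) (GE k)"
  unfolding minimal_uncolorable_def
proof (intro conjI allI impI)
  show "bihypergraph (GV k) (GE k)" using bihypergraph_G[OF assms] .
  show "\<not> colorable (GV k) (GE k)" using GE_not_colorable[OF assms] .
  fix V' E'
  assume sub: "bihypergraph V' E' \<and> V' \<subseteq> GV k \<and> E' \<subseteq> GE k \<and> (V', E') \<noteq> (GV k, GE k)"
  have "E' \<noteq> GE k"
  proof
    assume E': "E' = GE k"
    have "\<Union> E' \<subseteq> V'" using sub unfolding bihypergraph_def by blast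
    with E' GV_subset_Union_GE[OF assms] have "GV k \<subseteq> V'" by blast
    with sub E' show False by auto
  qed
  then show "colorable V' E'"
    using proper_subset_GE_colorable[OF assms] sub by blast
qed

end
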